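(* Let $\mathcal{M}=(V,\{A_i\}_{i\in V},P)$ be a finite Markov decision process with state set $V=\{1,\dots,n\}$, nonempty finite action sets $A_i$, and transition probabilities $P(i,a,j)\ge 0$ with $\sum_{j=1}^n P(i,a,j)=1$ for all $i\in V$, $a\in A_i$. Let $R\subseteq V$ and $S\subseteq V\setminus R$, and let $\rho>n$. Consider the linear programs $$\text{(LP1)}\quad \min_{\mathbf{x}\in\mathbb{R}^n}\ \mathbf{1}^T\mathbf{x}\ \text{ s.t. } \mathbf{x}\in[0,1]^n,\ x_i=1\ \forall i\in S,\ x_i=0\ \forall i\in R,\ x_i\ge \sum_{j=1}^n P(i,a,j)x_j\ \forall i\in V\setminus R,\ a\in A_i,$$ $$\text{(LP2)}\quad \min_{\mathbf{x}\in\mathbb{R}^n}\ \mathbf{1}^T\mathbf{x}+\rho\sum_{i\in S}(1-x_i)\ \text{ s.t. } \mathbf{x}\in[0,1]^n,\ x_i=0\ \forall i\in R,\ x_i\ge \sum_{j=1}^n P(i,a,j)x_j\ \forall i\in V\setminus R,\ a\in A_i.$$ Then (LP1) and (LP2) have the same optimal value and the same set of optimal solutions.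
   Context: Here $\mathbf{1}$ denotes the all-ones vector in $\mathbb{R}^n$. *)

theory Defs
  imports Main "HOL-Analysis.Analysis"
begin

text \<open>States are the elements of a finite type 'n (so n = CARD('n));
  actions of state i are A i; P i a j is the transition probability.
  Vectors x in R^n are functions 'n \<Rightarrow> real.\<close>

definition lp1_feasible ::
  "('n::finite \<Rightarrow> 'a set) \<Rightarrow> ('n \<Rightarrow> 'a \<Rightarrow> 'n \<Rightarrow> real) \<Rightarrow> 'n set \<Rightarrow> 'n set \<Rightarrow> ('n \<Rightarrow> real) set" where
  "lp1_feasible A P R S = {x. (\<forall>i. 0 \<le> x i \<and> x i \<le> 1) \<and> (\<forall>i\<in>S. x i = 1) \<and> (\<forall>i\<in>R. x i = 0)
     \<and> (\<forall>i. i \<notin> R \<longrightarrow> (\<forall>a\<in>A i. x i \<ge> (\<Sum>j\<in>UNIV. P i a j * x j)))}"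

definition lp2_feasible ::
  "('n::finite \<Rightarrow> 'a set) \<Rightarrow> ('n \<Rightarrow> 'a \<Rightarrow> 'n \<Rightarrow> real) \<Rightarrow> 'n set \<Rightarrow> ('n \<Rightarrow> real) set" where
  "lp2_feasible A P R = {x. (\<forall>i. 0 \<le> x i \<and> x i \<le> 1) \<and> (\<forall>i\<in>R. x i = 0)
     \<and> (\<forall>i. i \<notin> R \<longrightarrow> (\<forall>a\<in>A i. x i \<ge> (\<Sum>j\<in>UNIV. P i a j * x j)))}"

definition lp1_obj :: "('n::finite \<Rightarrow> real) \<Rightarrow> real" where
  "lp1_obj x = (\<Sum>i\<in>UNIV. x i)"

definition lp2_obj :: "real \<Rightarrow> 'n set \<Rightarrow> ('n::finite \<Rightarrow> real) \<Rightarrow> real" where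
  "lp2_obj \<rho> S x = (\<Sum>i\<in>UNIV. x i) + \<rho> * (\<Sum>i\<in>S. 1 - x i)"

definition opt_value :: "('b \<Rightarrow> real) \<Rightarrow> 'b set \<Rightarrow> real" where
  "opt_value f F = (INF x\<in>F. f x)"

definition opt_solutions :: "('b \<Rightarrow> real) \<Rightarrow> 'b set \<Rightarrow> 'b set" where
  "opt_solutions f F = {x \<in> F. \<forall>y\<in>F. f x \<le> f y}"

end

theory Submission
  imports Defs
begin

text \<open>Exact penalty argument: LP1 is LP2 with the constraints on S made hard, and both
  objectives agree on the LP1-feasible points. Given an LP2-feasible x with total deficit
  D = \<Sum>i\<in>S. 1 - x i, raising every coordinate outside R by D and capping at 1 keeps
  the superharmonicity constraints (a stochastic row does not grow by more than D) and yields
  an LP1-feasible point whose objective exceeds that of x by at most n D, whereas the penalty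
  charged by LP2 is \<rho> D > n D when D > 0. So every LP2-feasible point is strictly beaten
  by an LP1-feasible one unless it is already LP1-feasible.\<close>

lemma opt_value_eq_if_dominated:
  fixes f g :: "'b \<Rightarrow> real"
  assumes sub: "F \<subseteq> G" and eq: "\<And>x. x \<in> F \<Longrightarrow> g x = f x"
    and dom: "\<And>x. x \<in> G \<Longrightarrow> \<exists>y\<in>F. f y \<le> g x"
    and bdd: "bdd_below (f ` F)"
  shows "opt_value f F = opt_value g G"
proof (cases "F = {}")
  case True
  then have "G = {}" using dom by blast
  with True show ?thesis by (simp add: opt_value_def)
next
  case False
  have bdd_g: "bdd_below (g ` G)"
  proof -
    obtain m where "\<And>y. y \<in> F \<Longrightarrow> m \<le> f y" using bdd by (auto simp: bdd_below_def)
    then have "m \<le> g x" if "x \<in> G" for x using dom[OF that] by force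
    then show ?thesis by (rule bdd_belowI2)
  qed
  have "(INF x\<in>F. f x) \<le> (INF x\<in>G. g x)"
    using False sub dom bdd by (intro cINF_mono) auto
  moreover have "(INF x\<in>G. g x) \<le> (INF x\<in>F. f x)"
    using False sub eq bdd_g by (intro cINF_mono) force+
  ultimately show ?thesis by (simp add: opt_value_def)
qed

lemma opt_solutions_eq_if_strictly_dominated:
  fixes f g :: "'b \<Rightarrow> real"
  assumes sub: "F \<subseteq> G" and eq: "\<And>x. x \<in> F \<Longrightarrow> g x = f x"
    and dom: "\<And>x. x \<in> G \<Longrightarrow> \<exists>y\<in>F. f y \<le> g x \<and> (x \<notin> F \<longrightarrow> f y < g x)"
  shows "opt_solutions f F = opt_solutions g G"
proof
  show "opt_solutions f F \<subseteq> opt_solutions g G"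
  proof
    fix x assume "x \<in> opt_solutions f F"
    then have x: "x \<in> F" "\<And>y. y \<in> F \<Longrightarrow> f x \<le> f y" by (auto simp: opt_solutions_def)
    have "g x \<le> g w" if "w \<in> G" for w
      using dom[OF that] x eq[OF x(1)] by force
    then show "x \<in> opt_solutions g G" using x(1) sub by (auto simp: opt_solutions_def)
  qed
next
  show "opt_solutions g G \<subseteq> opt_solutions f F"
  proof
    fix x assume "x \<in> opt_solutions g G"
    then have x: "x \<in> G" "\<And>y. y \<in> G \<Longrightarrow> g x \<le> g y" by (auto simp: opt_solutions_def)
    have "x \<in> F"
    proof (rule ccontr)
      assume "x \<notin> F"
      then obtain y where "y \<in> F" "f y < g x" using dom[OF x(1)] by blast
      then show False using x(2)[of y] sub eq by fastforce
    qed
    then show "x \<in> opt_solutions f F"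
      using x sub eq by (fastforce simp: opt_solutions_def)
  qed
qed

lemma sum_stochastic_le_shift:
  fixes p x y :: "'j \<Rightarrow> real"
  assumes "finite J" and "\<And>j. j \<in> J \<Longrightarrow> 0 \<le> p j" and "sum p J = 1"
    and "\<And>j. j \<in> J \<Longrightarrow> y j \<le> x j + d"
  shows "(\<Sum>j\<in>J. p j * y j) \<le> (\<Sum>j\<in>J. p j * x j) + d"
proof -
  have "(\<Sum>j\<in>J. p j * y j) \<le> (\<Sum>j\<in>J. p j * (x j + d))"
    using assms by (intro sum_mono mult_left_mono) auto
  also have "\<dots> = (\<Sum>j\<in>J. p j * x j) + d * sum p J"
    by (simp add: algebra_simps sum.distrib sum_distrib_left)
  finally show ?thesis using assms(3) by simp
qed

lemma lp1_feasible_subset_lp2_feasible: "lp1_feasible A P R S \<subseteq> lp2_feasible A P R"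
  by (auto simp: lp1_feasible_def lp2_feasible_def)

lemma lp2_obj_eq_lp1_obj: "x \<in> lp1_feasible A P R S \<Longrightarrow> lp2_obj \<rho> S x = lp1_obj x"
  by (simp add: lp1_feasible_def lp2_obj_def lp1_obj_def)

lemma bdd_below_lp1_obj: "bdd_below (lp1_obj ` lp1_feasible A P R S)"
  by (rule bdd_belowI[of _ 0]) (auto simp: lp1_obj_def lp1_feasible_def intro: sum_nonneg)

definition raise_capped :: "'n set \<Rightarrow> real \<Rightarrow> ('n \<Rightarrow> real) \<Rightarrow> 'n \<Rightarrow> real" where
  "raise_capped R d x i = (if i \<in> R then 0 else min (x i + d) 1)"

lemma raise_capped_lp1_feasible:
  fixes A :: "'n::finite \<Rightarrow> 'a set" and P :: "'n \<Rightarrow> 'a \<Rightarrow> 'n \<Rightarrow> real"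
  assumes P0: "\<And>i a j. a \<in> A i \<Longrightarrow> P i a j \<ge> 0"
    and P1: "\<And>i a. a \<in> A i \<Longrightarrow> (\<Sum>j\<in>UNIV. P i a j) = 1"
    and SR: "S \<subseteq> UNIV - R"
    and x: "x \<in> lp2_feasible A P R"
    and d: "0 \<le> d" "\<And>i. i \<in> S \<Longrightarrow> 1 - x i \<le> d"
  shows "raise_capped R d x \<in> lp1_feasible A P R S"
proof -
  let ?y = "raise_capped R d x"
  have xb: "\<And>i. 0 \<le> x i \<and> x i \<le> 1" and xR: "\<And>i. i \<in> R \<Longrightarrow> x i = 0"
    and xc: "\<And>i a. i \<notin> R \<Longrightarrow> a \<in> A i \<Longrightarrow> (\<Sum>j\<in>UNIV. P i a j * x j) \<le> x i"
    using x by (auto simp: lp2_feasible_def)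
  have y_le: "?y j \<le> x j + d" "?y j \<le> 0 + 1" for j
    using xR[of j] d(1) by (auto simp: raise_capped_def)
  have "(\<Sum>j\<in>UNIV. P i a j * ?y j) \<le> ?y i" if "i \<notin> R" "a \<in> A i" for i a
  proof -
    have "(\<Sum>j\<in>UNIV. P i a j * ?y j) \<le> (\<Sum>j\<in>UNIV. P i a j * x j) + d"
      using that by (intro sum_stochastic_le_shift P0 P1 y_le) auto
    moreover have "(\<Sum>j\<in>UNIV. P i a j * ?y j) \<le> (\<Sum>j\<in>UNIV. P i a j * 0) + 1"
      using that by (intro sum_stochastic_le_shift P0 P1 y_le) auto
    ultimately show ?thesis using xc[OF that] that by (simp add: raise_capped_def)
  qed
  moreover have "?y i = 1" if "i \<in> S" for i
    using that SR d(2)[OF that] by (auto simp: raise_capped_def)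
  ultimately show ?thesis
    using xb d(1) by (auto simp: lp1_feasible_def raise_capped_def)
qed

lemma lp1_obj_raise_capped_le:
  fixes x :: "'n::finite \<Rightarrow> real"
  assumes "\<And>i. 0 \<le> x i" and "0 \<le> d"
  shows "lp1_obj (raise_capped R d x) \<le> lp1_obj x + real CARD('n) * d"
proof -
  have "lp1_obj (raise_capped R d x) \<le> (\<Sum>i\<in>UNIV. x i + d)"
    unfolding lp1_obj_def using assms by (intro sum_mono) (auto simp: raise_capped_def)
  then show ?thesis by (simp add: lp1_obj_def sum.distrib)
qed

lemma lp2_feasible_strictly_dominated:
  fixes A :: "'n::finite \<Rightarrow> 'a set" and P :: "'n \<Rightarrow> 'a \<Rightarrow> 'n \<Rightarrow> real"
  assumes P0: "\<And>i a j. a \<in> A i \<Longrightarrow> P i a j \<ge> 0"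
    and P1: "\<And>i a. a \<in> A i \<Longrightarrow> (\<Sum>j\<in>UNIV. P i a j) = 1"
    and SR: "S \<subseteq> UNIV - R"
    and \<rho>: "\<rho> > real CARD('n)"
    and x: "x \<in> lp2_feasible A P R"
  shows "\<exists>y\<in>lp1_feasible A P R S. lp1_obj y \<le> lp2_obj \<rho> S x
           \<and> (x \<notin> lp1_feasible A P R S \<longrightarrow> lp1_obj y < lp2_obj \<rho> S x)"
proof -
  have xb: "\<And>i. 0 \<le> x i \<and> x i \<le> 1" using x by (auto simp: lp2_feasible_def)
  define D where "D = (\<Sum>i\<in>S. 1 - x i)"
  have D0: "0 \<le> D" unfolding D_def using xb by (intro sum_nonneg) auto
  have DS: "1 - x i \<le> D" if "i \<in> S" for i
    unfolding D_def using that xb by (intro member_le_sum) auto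
  let ?y = "raise_capped R D x"
  have y: "?y \<in> lp1_feasible A P R S"
    using raise_capped_lp1_feasible[OF P0 P1 SR x D0 DS] .
  have obj_y: "lp1_obj ?y \<le> lp1_obj x + real CARD('n) * D"
    using lp1_obj_raise_capped_le xb D0 by blast
  have obj_x: "lp2_obj \<rho> S x = lp1_obj x + \<rho> * D"
    by (simp add: lp2_obj_def lp1_obj_def D_def)
  have "real CARD('n) * D \<le> \<rho> * D" using \<rho> D0 by (intro mult_right_mono) auto
  moreover have "real CARD('n) * D < \<rho> * D" if infeasible: "x \<notin> lp1_feasible A P R S"
  proof -
    obtain i where "i \<in> S" "x i \<noteq> 1"
      using infeasible x by (auto simp: lp1_feasible_def lp2_feasible_def)
    with xb[of i] DS[of i] have "0 < D" by fastforce
    then show ?thesis using \<rho> by simp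
  qed
  ultimately show ?thesis using y obj_y obj_x by force
qed

theorem lemma3:
  fixes A :: "'n::finite \<Rightarrow> 'a set"
    and P :: "'n \<Rightarrow> 'a \<Rightarrow> 'n \<Rightarrow> real"
    and R S :: "'n set"
    and \<rho> :: real
  assumes "\<And>i. finite (A i)"
    and "\<And>i. A i \<noteq> {}"
    and "\<And>i a j. a \<in> A i \<Longrightarrow> P i a j \<ge> 0"
    and "\<And>i a. a \<in> A i \<Longrightarrow> (\<Sum>j\<in>UNIV. P i a j) = 1"
    and "S \<subseteq> UNIV - R"
    and "\<rho> > real CARD('n)"
  shows "opt_value lp1_obj (lp1_feasible A P R S) = opt_value (lp2_obj \<rho> S) (lp2_feasible A P R)
       \<and> opt_solutions lp1_obj (lp1_feasible A P R S) = opt_solutions (lp2_obj \<rho> S) (lp2_feasible A P R)"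
proof -
  have dom: "\<exists>y\<in>lp1_feasible A P R S. lp1_obj y \<le> lp2_obj \<rho> S x
               \<and> (x \<notin> lp1_feasible A P R S \<longrightarrow> lp1_obj y < lp2_obj \<rho> S x)"
    if "x \<in> lp2_feasible A P R" for x
    using lp2_feasible_strictly_dominated[OF assms(3-6) that] .
  show ?thesis
  proof
    show "opt_value lp1_obj (lp1_feasible A P R S) = opt_value (lp2_obj \<rho> S) (lp2_feasible A P R)"
      using dom by (intro opt_value_eq_if_dominated lp1_feasible_subset_lp2_feasible
          lp2_obj_eq_lp1_obj bdd_below_lp1_obj) (blast+)
    show "opt_solutions lp1_obj (lp1_feasible A P R S) = opt_solutions (lp2_obj \<rho> S) (lp2_feasible A P R)"
      using dom by (intro opt_solutions_eq_if_strictly_dominated lp1_feasible_subset_lp2_feasible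
          lp2_obj_eq_lp1_obj) (blast+)
  qed
qed

end
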